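(* Let $\mathcal{F}$ be a monotone family of graphs (closed under taking subgraphs) and let $C\ge 1$. Suppose there is a strategy $A$ for the $k$-CTP whose competitive ratio is at most $C$ on every road map $(G,E_* )$ with $|E_*|\le k$ such that $G\in\mathcal{F}$ and $G$ has no articulation point. Then there is a strategy $A'$ whose competitive ratio is at most $C$ on every road map $(G,E_* )$ with $|E_*|\le k$ and $G\in\mathcal{F}$.
   Context: The $k$-Canadian Traveller Problem ($k$-CTP): we are given an undirected connected graph $G=(V,E,\omega)$ with weights $\omega:E\to\mathbb{Q}^+$, a source $s\in V$ and a target $t\in V$, and a hidden set $E_*\subsetneq E$ of blocked edges with $|E_*|\le k$. The pair $(G,E_* )$ is a road map if $s$ and $t$ are connected in $G\setminus E_*$; only road maps are considered. A traveller starts at $s$ and must reach $t$. Initially $E_*$ is unknown; the traveller learns whether an edge is blocked exactly when he visits one of its endpoints. A (deterministic) strategy is an online algorithm which, given $G$, $\omega$, $s$, $t$, $k$, the sequence of vertices visited so far and the set of blocked edges revealed so far, chooses the next vertex, a neighbour of the current vertex through an edge not known to be blocked. The cost of the resulting $(s,t)$-walk is the sum of the weights of the traversed edges (with multiplicity). The competitive ratio of $A$ on $(G,E_* )$ is this cost divided by $d_{E_*}(s,t)$, the length of a shortest $(s,t)$-path in $G\setminus E_*$. A vertex $v$ is an articulation point of a connected graph $G$ if $G\setminus\{v\}$ is disconnected. *)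

theory Defs
  imports Complex_Main
begin

text \<open>A graph is a pair (V, E) of a vertex set and a set of edges, each edge being a
  two-element subset of V (undirected, simple).\<close>
type_synonym 'v graph = "'v set \<times> 'v set set"

text \<open>A deterministic online strategy for the k-CTP: given the graph, the weights, s, t, k,
  the sequence of vertices visited so far and the set of blocked edges revealed so far,
  it returns the next vertex.\<close>
type_synonym 'v strategy =
  "'v graph \<Rightarrow> ('v set \<Rightarrow> rat) \<Rightarrow> 'v \<Rightarrow> 'v \<Rightarrow> nat \<Rightarrow> 'v list \<Rightarrow> 'v set set \<Rightarrow> 'v"

definition wf_graph :: "'v graph \<Rightarrow> bool" where
  "wf_graph G \<longleftrightarrow> finite (fst G) \<and>
     (\<forall>e\<in>snd G. \<exists>u v. u \<noteq> v \<and> u \<in> fst G \<and> v \<in> fst G \<and> e = {u, v})"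

definition is_walk :: "'v set \<Rightarrow> 'v set set \<Rightarrow> 'v list \<Rightarrow> bool" where
  "is_walk V E p \<longleftrightarrow> p \<noteq> [] \<and> set p \<subseteq> V \<and>
     (\<forall>i. Suc i < length p \<longrightarrow> {p ! i, p ! Suc i} \<in> E)"

definition walk_cost :: "('v set \<Rightarrow> rat) \<Rightarrow> 'v list \<Rightarrow> rat" where
  "walk_cost \<omega> p = (\<Sum>i < length p - 1. \<omega> {p ! i, p ! Suc i})"

definition connected_in :: "'v set \<Rightarrow> 'v set set \<Rightarrow> 'v \<Rightarrow> 'v \<Rightarrow> bool" where
  "connected_in V E u v \<longleftrightarrow> (\<exists>p. is_walk V E p \<and> hd p = u \<and> last p = v)"

definition connected_graph :: "'v graph \<Rightarrow> bool" where
  "connected_graph G \<longleftrightarrow> (\<forall>u\<in>fst G. \<forall>v\<in>fst G. connected_in (fst G) (snd G) u v)"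

definition articulation_point :: "'v graph \<Rightarrow> 'v \<Rightarrow> bool" where
  "articulation_point G v \<longleftrightarrow> v \<in> fst G \<and>
     \<not> connected_graph (fst G - {v}, {e \<in> snd G. v \<notin> e})"

definition shortest_dist :: "'v set \<Rightarrow> 'v set set \<Rightarrow> ('v set \<Rightarrow> rat) \<Rightarrow> 'v \<Rightarrow> 'v \<Rightarrow> rat" where
  "shortest_dist V E \<omega> s t =
     Min (walk_cost \<omega> ` {p. is_walk V E p \<and> distinct p \<and> hd p = s \<and> last p = t})"

definition revealed :: "'v set set \<Rightarrow> 'v list \<Rightarrow> 'v set set" where
  "revealed Eb p = {e \<in> Eb. \<exists>v\<in>set p. v \<in> e}"

primrec traj :: "'v strategy \<Rightarrow> 'v graph \<Rightarrow> ('v set \<Rightarrow> rat) \<Rightarrow> 'v \<Rightarrow> 'v \<Rightarrow> nat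
    \<Rightarrow> 'v set set \<Rightarrow> nat \<Rightarrow> 'v list" where
  "traj A G \<omega> s t k Eb 0 = [s]"
| "traj A G \<omega> s t k Eb (Suc n) =
     (let p = traj A G \<omega> s t k Eb n in
      if last p = t then p else p @ [A G \<omega> s t k p (revealed Eb p)])"

definition ctp_instance :: "'v graph \<Rightarrow> ('v set \<Rightarrow> rat) \<Rightarrow> 'v \<Rightarrow> 'v \<Rightarrow> nat \<Rightarrow> 'v set set \<Rightarrow> bool" where
  "ctp_instance G \<omega> s t k Eb \<longleftrightarrow> wf_graph G \<and> connected_graph G \<and>
     (\<forall>e\<in>snd G. \<omega> e > 0) \<and> s \<in> fst G \<and> t \<in> fst G \<and>
     Eb \<subset> snd G \<and> card Eb \<le> k \<and> connected_in (fst G) (snd G - Eb) s t"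

definition competitive_within :: "'v strategy \<Rightarrow> 'v graph \<Rightarrow> ('v set \<Rightarrow> rat) \<Rightarrow> 'v \<Rightarrow> 'v
    \<Rightarrow> nat \<Rightarrow> 'v set set \<Rightarrow> real \<Rightarrow> bool" where
  "competitive_within A G \<omega> s t k Eb C \<longleftrightarrow>
     (\<exists>n. let p = traj A G \<omega> s t k Eb n in
        last p = t \<and> is_walk (fst G) (snd G - Eb) p \<and>
        real_of_rat (walk_cost \<omega> p) \<le> C * real_of_rat (shortest_dist (fst G) (snd G - Eb) \<omega> s t))"

definition monotone_family :: "'v graph set \<Rightarrow> bool" where
  "monotone_family F \<longleftrightarrow> (\<forall>V E V' E'. (V, E) \<in> F \<longrightarrow> V' \<subseteq> V \<longrightarrow> E' \<subseteq> E \<longrightarrow>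
     (\<forall>e\<in>E'. e \<subseteq> V') \<longrightarrow> (V', E') \<in> F)"

end

theory Submission
  imports Defs
begin

text \<open>Induction on the number of vertices. Without an articulation point the given strategy does the
  job. Otherwise let \<open>v\<close> be an articulation point and call a lobe a component of \<open>G - v\<close>
  together with \<open>v\<close>; lobes are proper connected induced subgraphs, hence in the family. If \<open>s\<close>
  and \<open>t\<close> lie in a common lobe, so does every shortest \<open>(s,t)\<close>-path of \<open>G \<setminus> E\<^sub>*\<close>, and the
  strategy for that lobe, shown only the blocked edges inside it, is \<open>C\<close>-competitive. Otherwise
  every \<open>(s,t)\<close>-path passes through \<open>v\<close>, so a shortest one splits into shortest paths from \<open>s\<close>
  to \<open>v\<close> in the lobe of \<open>s\<close> and from \<open>v\<close> to \<open>t\<close> in the lobe of \<open>t\<close>; running the strategy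
  for the first until \<open>v\<close> is reached and then the one for the second costs at most \<open>C\<close> times the
  sum of their lengths.\<close>

lemma is_walk_iff: "is_walk V E p \<longleftrightarrow> p \<noteq> [] \<and> set p \<subseteq> V \<and> successively (\<lambda>x y. {x, y} \<in> E) p"
  unfolding is_walk_def successively_conv_nth by blast

lemma not_is_walk_Nil [simp]: "\<not> is_walk V E []"
  by (simp add: is_walk_iff)

lemma is_walk_singleton [simp]: "is_walk V E [x] \<longleftrightarrow> x \<in> V"
  by (simp add: is_walk_iff)

lemma is_walk_Cons_Cons [simp]:
  "is_walk V E (x # y # p) \<longleftrightarrow> x \<in> V \<and> {x, y} \<in> E \<and> is_walk V E (y # p)"
  by (auto simp: is_walk_iff)

lemma is_walk_nonempty: "is_walk V E p \<Longrightarrow> p \<noteq> []"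
  by (simp add: is_walk_iff)

lemma set_walk_subset: "is_walk V E p \<Longrightarrow> set p \<subseteq> V"
  by (simp add: is_walk_iff)

lemma is_walk_mono: "is_walk V E p \<Longrightarrow> V \<subseteq> V' \<Longrightarrow> E \<subseteq> E' \<Longrightarrow> is_walk V' E' p"
  unfolding is_walk_def by blast

lemma is_walk_rev: "is_walk V E p \<Longrightarrow> is_walk V E (rev p)"
  by (simp add: is_walk_iff insert_commute)

lemma is_walk_appendD1: "is_walk V E (xs @ ys) \<Longrightarrow> xs \<noteq> [] \<Longrightarrow> is_walk V E xs"
  by (auto simp: is_walk_iff successively_append_iff)

lemma is_walk_appendD2: "is_walk V E (xs @ ys) \<Longrightarrow> ys \<noteq> [] \<Longrightarrow> is_walk V E ys"
  by (auto simp: is_walk_iff successively_append_iff)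

lemma is_walk_append_tl:
  "is_walk V E xs \<Longrightarrow> is_walk V E ys \<Longrightarrow> last xs = hd ys \<Longrightarrow> is_walk V E (xs @ tl ys)"
proof (induction xs rule: induct_list012)
  case (2 x)
  then show ?case by (cases ys) auto
qed auto

lemma last_append_tl: "xs \<noteq> [] \<Longrightarrow> ys \<noteq> [] \<Longrightarrow> last xs = hd ys \<Longrightarrow> last (xs @ tl ys) = last ys"
  by (cases ys) auto

lemma walk_cost_singleton [simp]: "walk_cost \<omega> [x] = 0"
  by (simp add: walk_cost_def)

lemma walk_cost_Cons_Cons [simp]: "walk_cost \<omega> (x # y # p) = \<omega> {x, y} + walk_cost \<omega> (y # p)"
  unfolding walk_cost_def by (simp add: sum.lessThan_Suc_shift del: sum.lessThan_Suc)

lemma walk_cost_append_tl: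
  "xs \<noteq> [] \<Longrightarrow> last xs = hd ys \<Longrightarrow> walk_cost \<omega> (xs @ tl ys) = walk_cost \<omega> xs + walk_cost \<omega> ys"
proof (induction xs rule: induct_list012)
  case (2 x)
  then show ?case by (cases ys) (auto simp: walk_cost_def)
qed auto

lemma walk_cost_nonneg: "is_walk V E p \<Longrightarrow> \<forall>e\<in>E. \<omega> e > 0 \<Longrightarrow> 0 \<le> walk_cost \<omega> p"
  by (induction p rule: induct_list012) (auto intro: add_nonneg_nonneg less_imp_le)

lemma walk_propagate:
  assumes "is_walk V E p" "P (hd p)" "\<And>x y. P x \<Longrightarrow> {x, y} \<in> E \<Longrightarrow> y \<in> set p \<Longrightarrow> P y"
  shows "\<forall>y\<in>set p. P y"
  using assms
proof (induction p rule: induct_list012)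
  case (3 x y p)
  have "P y" using "3.prems"(3)[of x y] "3.prems"(1,2) by simp
  moreover have "\<forall>z\<in>set (y # p). P z"
  proof (rule "3.IH"(2))
    show "is_walk V E (y # p)" "P (hd (y # p))" using "3.prems"(1) \<open>P y\<close> by simp_all
    show "P z" if "P w" "{w, z} \<in> E" "z \<in> set (y # p)" for w z
      using "3.prems"(3)[of w z] that by simp
  qed
  ultimately show ?case using "3.prems"(2) by simp
qed simp_all

lemma connected_in_memD: "connected_in V E a b \<Longrightarrow> a \<in> V \<and> b \<in> V"
  unfolding connected_in_def is_walk_iff by auto

lemma connected_in_refl: "a \<in> V \<Longrightarrow> connected_in V E a a"
  unfolding connected_in_def by (rule exI[of _ "[a]"]) simp

lemma connected_in_edge: "{a, b} \<in> E \<Longrightarrow> a \<in> V \<Longrightarrow> b \<in> V \<Longrightarrow> connected_in V E a b"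
  unfolding connected_in_def by (rule exI[of _ "[a, b]"]) simp

lemma connected_in_sym: "connected_in V E a b \<Longrightarrow> connected_in V E b a"
  unfolding connected_in_def
  by (metis is_walk_rev hd_rev last_rev)

lemma connected_in_trans:
  assumes "connected_in V E a b" "connected_in V E b c"
  shows "connected_in V E a c"
proof -
  obtain p q where "is_walk V E p" "hd p = a" "last p = b" "is_walk V E q" "hd q = b" "last q = c"
    using assms unfolding connected_in_def by blast
  then show ?thesis unfolding connected_in_def
    by (intro exI[of _ "p @ tl q"]) (simp add: is_walk_append_tl last_append_tl is_walk_nonempty)
qed

lemma connected_in_induct:
  assumes "connected_in V E a b" "P a" "\<And>x y. P x \<Longrightarrow> {x, y} \<in> E \<Longrightarrow> y \<in> V \<Longrightarrow> P y"
  shows "P b"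
proof -
  obtain p where p: "is_walk V E p" "hd p = a" "last p = b"
    using assms(1) unfolding connected_in_def by blast
  have "\<forall>y\<in>set p. P y"
  proof (rule walk_propagate[OF p(1)])
    show "P (hd p)" using p(2) assms(2) by simp
    show "P y" if "P x" "{x, y} \<in> E" "y \<in> set p" for x y
      using assms(3) that set_walk_subset[OF p(1)] by blast
  qed
  then show ?thesis using p by (metis is_walk_nonempty last_in_set)
qed

lemma exists_distinct_walk:
  "is_walk V E p \<Longrightarrow> \<exists>q. is_walk V E q \<and> distinct q \<and> hd q = hd p \<and> last q = last p"
proof (induction "length p" arbitrary: p rule: less_induct)
  case less
  show ?case
  proof (cases "distinct p")
    case False
    then obtain xs ys zs y where p: "p = xs @ [y] @ ys @ [y] @ zs"
      using not_distinct_decomp by blast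
    let ?q = "xs @ [y] @ zs"
    have "is_walk V E (y # zs)"
      using less(2) is_walk_appendD2[of V E "xs @ [y] @ ys" "y # zs"] unfolding p by simp
    then have "is_walk V E ?q"
      using less(2) unfolding p by (auto simp: is_walk_iff successively_append_iff)
    moreover have "hd ?q = hd p" "last ?q = last p" "length ?q < length p"
      unfolding p by (cases xs; simp)+
    ultimately show ?thesis using less(1) by metis
  qed (use less in blast)
qed

lemma finite_distinct_walks: "finite V \<Longrightarrow> finite {p. is_walk V E p \<and> distinct p \<and> P p}"
proof -
  assume V: "finite V"
  have "{p. is_walk V E p \<and> distinct p \<and> P p} \<subseteq> {p. set p \<subseteq> V \<and> length p \<le> card V}"
  proof
    fix p assume "p \<in> {p. is_walk V E p \<and> distinct p \<and> P p}"
    then have "set p \<subseteq> V" "distinct p" by (auto simp: is_walk_iff)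
    then show "p \<in> {p. set p \<subseteq> V \<and> length p \<le> card V}"
      by (metis card_mono[OF V] distinct_card mem_Collect_eq)
  qed
  then show ?thesis using finite_lists_length_le[OF V] finite_subset by blast
qed

lemma shortest_dist_le:
  "finite V \<Longrightarrow> is_walk V E p \<Longrightarrow> distinct p \<Longrightarrow> hd p = s \<Longrightarrow> last p = t \<Longrightarrow>
   shortest_dist V E \<omega> s t \<le> walk_cost \<omega> p"
  unfolding shortest_dist_def by (rule Min_le) (auto intro: finite_distinct_walks)

lemma shortest_dist_attained:
  assumes "finite V" "connected_in V E s t"
  obtains p where "is_walk V E p" "distinct p" "hd p = s" "last p = t"
    "shortest_dist V E \<omega> s t = walk_cost \<omega> p"
proof -
  let ?S = "{p. is_walk V E p \<and> distinct p \<and> hd p = s \<and> last p = t}"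
  have "?S \<noteq> {}"
    using assms(2) exists_distinct_walk unfolding connected_in_def by fastforce
  then have "shortest_dist V E \<omega> s t \<in> walk_cost \<omega> ` ?S"
    unfolding shortest_dist_def by (intro Min_in) (auto intro: finite_distinct_walks[OF assms(1)])
  then obtain p where "p \<in> ?S" "shortest_dist V E \<omega> s t = walk_cost \<omega> p" by blast
  then show ?thesis using that by blast
qed

text \<open>\<open>traj\<close> with the instance data fixed, so that strategies for subgraphs can be restricted
  and concatenated.\<close>
primrec run :: "('v list \<Rightarrow> 'v set set \<Rightarrow> 'v) \<Rightarrow> 'v \<Rightarrow> 'v \<Rightarrow> 'v set set \<Rightarrow> nat \<Rightarrow> 'v list" where
  "run g s t Eb 0 = [s]"
| "run g s t Eb (Suc n) =
     (let p = run g s t Eb n in if last p = t then p else p @ [g p (revealed Eb p)])"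

lemma traj_eq_run: "traj A G \<omega> s t k Eb n = run (A G \<omega> s t k) s t Eb n"
  by (induction n) (simp_all add: Let_def)

lemma run_nonempty [simp]: "run g s t Eb n \<noteq> []"
  by (induction n) (auto simp: Let_def)

lemma hd_run [simp]: "hd (run g s t Eb n) = s"
  by (induction n) (auto simp: Let_def)

lemma run_stationary: "last (run g s t Eb n) = t \<Longrightarrow> n \<le> m \<Longrightarrow> run g s t Eb m = run g s t Eb n"
  by (induction m) (auto simp: Let_def le_Suc_eq)

lemma run_prefix: "m \<le> n \<Longrightarrow> \<exists>r. run g s t Eb n = run g s t Eb m @ r"
proof (induction n)
  case (Suc n)
  then show ?case by (cases "m = Suc n") (auto simp: Let_def le_Suc_eq)
qed simp

lemma set_run_subset_final:
  assumes "last (run g s t Eb n) = t"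
  shows "set (run g s t Eb m) \<subseteq> set (run g s t Eb n)"
proof (cases "m \<le> n")
  case True
  then show ?thesis using run_prefix[OF True, of g s t Eb] by auto
qed (use run_stationary[OF assms, of m] in simp)

lemma target_notin_run: "last (run g s t Eb n) \<noteq> t \<Longrightarrow> t \<notin> set (run g s t Eb n)"
  by (induction n) (auto simp: Let_def split: if_splits)

lemma target_notin_butlast_run: "t \<notin> set (butlast (run g s t Eb n))"
  by (induction n) (auto simp: Let_def dest: target_notin_run)

lemma revealed_inter: "revealed Eb p \<inter> E' = revealed (Eb \<inter> E') p"
  unfolding revealed_def by blast

lemma run_restrict: "run (\<lambda>p R. g p (R \<inter> E')) s t Eb n = run g s t (Eb \<inter> E') n"
  by (induction n) (simp_all add: Let_def revealed_inter)

definition concat_strategy ::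
    "'v \<Rightarrow> 'v set set \<Rightarrow> ('v list \<Rightarrow> 'v set set \<Rightarrow> 'v) \<Rightarrow> 'v set set \<Rightarrow> ('v list \<Rightarrow> 'v set set \<Rightarrow> 'v)
     \<Rightarrow> 'v list \<Rightarrow> 'v set set \<Rightarrow> 'v" where
  "concat_strategy v E1 g1 E2 g2 p R =
     (if v \<in> set p then g2 (dropWhile (\<lambda>x. x \<noteq> v) p) (R \<inter> E2) else g1 p (R \<inter> E1))"

lemma run_concat_first:
  assumes "\<And>m. t \<notin> set (run g1 s v (Eb \<inter> E1) m)"
  shows "\<forall>j<n. last (run g1 s v (Eb \<inter> E1) j) \<noteq> v \<Longrightarrow>
    run (concat_strategy v E1 g1 E2 g2) s t Eb n = run g1 s v (Eb \<inter> E1) n"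
proof (induction n)
  case (Suc n)
  let ?p = "run g1 s v (Eb \<inter> E1) n"
  have "last ?p \<noteq> v" using Suc.prems by simp
  then have "v \<notin> set ?p" by (rule target_notin_run)
  moreover have "last ?p \<noteq> t" using assms[of n] last_in_set[OF run_nonempty] by metis
  ultimately show ?case
    using Suc \<open>last ?p \<noteq> v\<close> by (simp add: Let_def concat_strategy_def revealed_inter)
qed simp

lemma revealed_append_inter:
  "(\<And>e x. e \<in> E' \<Longrightarrow> x \<in> set xs \<Longrightarrow> x \<in> e \<Longrightarrow> x \<in> set ys) \<Longrightarrow>
   revealed Eb (xs @ ys) \<inter> E' = revealed (Eb \<inter> E') ys"
  unfolding revealed_def by fastforce

lemma run_concat_second:
  assumes P: "run (concat_strategy v E1 g1 E2 g2) s t Eb n = P" "last P = v" "v \<notin> set (butlast P)"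
    and sep: "\<forall>e\<in>E2. \<forall>x\<in>set P. x \<in> e \<longrightarrow> x = v"
  shows "run (concat_strategy v E1 g1 E2 g2) s t Eb (n + m) = P @ tl (run g2 v t (Eb \<inter> E2) m)"
proof (induction m)
  case (Suc m)
  let ?q = "run g2 v t (Eb \<inter> E2) m"
  have q: "?q = v # tl ?q" by (metis hd_run run_nonempty list.collapse)
  have "P = butlast P @ [v]" using P by (metis append_butlast_last_id run_nonempty)
  then have split: "P @ tl ?q = butlast P @ ?q" using q by (metis append.assoc append_Cons append_Nil)
  have "dropWhile (\<lambda>x. x \<noteq> v) (P @ tl ?q) = dropWhile (\<lambda>x. x \<noteq> v) ?q"
    unfolding split using P(3) by (intro dropWhile_append2) auto
  also have "\<dots> = ?q"
    by (cases ?q) (use hd_run[of g2 v t "Eb \<inter> E2" m] in auto)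
  moreover
  have "revealed Eb (P @ tl ?q) \<inter> E2 = revealed (Eb \<inter> E2) ?q"
    unfolding split using sep by (intro revealed_append_inter) (metis in_set_butlastD list.set_intros(1) q)
  moreover have "v \<in> set (P @ tl ?q)" "last (P @ tl ?q) = last ?q"
    unfolding split by (metis in_set_conv_decomp q, simp)
  ultimately show ?case using Suc by (simp add: Let_def concat_strategy_def)
qed (use P in simp)

lemma run_concat:
  assumes reach: "last (run g1 s v (Eb \<inter> E1) n1) = v" and U: "set (run g1 s v (Eb \<inter> E1) n1) \<subseteq> U"
    and "t \<notin> U" and sep: "\<forall>e\<in>E2. e \<inter> U \<subseteq> {v}"
  shows "\<exists>n. run (concat_strategy v E1 g1 E2 g2) s t Eb n
    = run g1 s v (Eb \<inter> E1) n1 @ tl (run g2 v t (Eb \<inter> E2) n2)"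
proof -
  define n0 where "n0 = (LEAST n. last (run g1 s v (Eb \<inter> E1) n) = v)"
  have reach0: "last (run g1 s v (Eb \<inter> E1) n0) = v"
    unfolding n0_def by (rule LeastI[of _ n1]) (rule reach)
  have P: "run g1 s v (Eb \<inter> E1) n1 = run g1 s v (Eb \<inter> E1) n0"
    by (rule run_stationary[OF reach0]) (simp add: n0_def Least_le reach)
  have "t \<notin> set (run g1 s v (Eb \<inter> E1) m)" for m
    using set_run_subset_final[OF reach, of m] U \<open>t \<notin> U\<close> by blast
  then have first: "run (concat_strategy v E1 g1 E2 g2) s t Eb n0 = run g1 s v (Eb \<inter> E1) n1"
    unfolding P by (rule run_concat_first) (use not_less_Least n0_def in blast)
  then show ?thesis
    using run_concat_second[OF first reach target_notin_butlast_run[of v g1 s _ n1]] sep U by blast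
qed

definition induced_edges :: "'v set set \<Rightarrow> 'v set \<Rightarrow> 'v set set" where
  "induced_edges E U = {e \<in> E. e \<subseteq> U}"

lemma wf_graph_finite_edges: "wf_graph (V, E) \<Longrightarrow> finite E"
proof -
  assume "wf_graph (V, E)"
  then have "E \<subseteq> Pow V" "finite V" unfolding wf_graph_def by auto
  then show ?thesis by (meson finite_Pow_iff finite_subset)
qed

lemma wf_graph_edgeD: "wf_graph (V, E) \<Longrightarrow> {x, y} \<in> E \<Longrightarrow> x \<in> V \<and> y \<in> V"
  unfolding wf_graph_def by (auto simp: doubleton_eq_iff)

lemma wf_graph_induced:
  assumes "wf_graph (V, E)" "U \<subseteq> V"
  shows "wf_graph (U, induced_edges E U)"
  unfolding wf_graph_def fst_conv snd_conv
proof (intro conjI ballI)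
  show "finite U" using assms finite_subset unfolding wf_graph_def by auto
  fix e assume e: "e \<in> induced_edges E U"
  then obtain u w where "u \<noteq> w" "e = {u, w}"
    using assms(1) unfolding wf_graph_def induced_edges_def by auto
  then show "\<exists>u w. u \<noteq> w \<and> u \<in> U \<and> w \<in> U \<and> e = {u, w}"
    using e unfolding induced_edges_def by auto
qed

lemma is_walk_induced: "is_walk V E p \<Longrightarrow> set p \<subseteq> U \<Longrightarrow> is_walk U (induced_edges E U) p"
  unfolding is_walk_iff induced_edges_def by (auto elim!: successively_mono)

lemma induced_edges_Diff: "induced_edges (E - Eb) U = induced_edges E U - Eb"
  unfolding induced_edges_def by blast

lemma monotone_family_induced:
  assumes "monotone_family F" "(V, E) \<in> F" "U \<subseteq> V"
  shows "(U, induced_edges E U) \<in> F"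
proof -
  have "induced_edges E U \<subseteq> E" "\<forall>e\<in>induced_edges E U. e \<subseteq> U"
    unfolding induced_edges_def by auto
  then show ?thesis
    using assms(1)[unfolded monotone_family_def, rule_format, OF assms(2,3)] by blast
qed

definition walk_to_within :: "'v set \<Rightarrow> 'v set set \<Rightarrow> ('v set \<Rightarrow> rat) \<Rightarrow> 'v \<Rightarrow> real \<Rightarrow> 'v list \<Rightarrow> bool" where
  "walk_to_within V E \<omega> t c p \<longleftrightarrow> is_walk V E p \<and> last p = t \<and> real_of_rat (walk_cost \<omega> p) \<le> c"

lemma walk_to_within_mono:
  "walk_to_within V E \<omega> t c p \<Longrightarrow> V \<subseteq> V' \<Longrightarrow> E \<subseteq> E' \<Longrightarrow> c \<le> c' \<Longrightarrow> walk_to_within V' E' \<omega> t c' p"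
  unfolding walk_to_within_def using is_walk_mono by fastforce

lemma walk_to_within_induced:
  "walk_to_within U (induced_edges E U - Eb) \<omega> t c q \<Longrightarrow> U \<subseteq> V \<Longrightarrow> walk_to_within V (E - Eb) \<omega> t c q"
  by (erule walk_to_within_mono) (auto simp: induced_edges_def)

lemma walk_to_within_append_tl:
  assumes "walk_to_within V E \<omega> v c p" "walk_to_within V E \<omega> t d q" "hd q = v"
  shows "walk_to_within V E \<omega> t (c + d) (p @ tl q)"
proof -
  have p: "is_walk V E p" "last p = v" and q: "is_walk V E q" "last q = t"
    using assms(1,2) unfolding walk_to_within_def by auto
  have "is_walk V E (p @ tl q)"
    using is_walk_append_tl[OF p(1) q(1)] p(2) assms(3) by simp
  moreover have "last (p @ tl q) = t"
    using last_append_tl[OF is_walk_nonempty[OF p(1)] is_walk_nonempty[OF q(1)]] p(2) q(2) assms(3)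
    by simp
  moreover have "walk_cost \<omega> (p @ tl q) = walk_cost \<omega> p + walk_cost \<omega> q"
    using walk_cost_append_tl[OF is_walk_nonempty[OF p(1)]] p(2) assms(3) by simp
  ultimately show ?thesis
    using assms(1,2) unfolding walk_to_within_def by (simp add: of_rat_add)
qed

definition competitive_on ::
    "nat \<Rightarrow> real \<Rightarrow> 'v graph \<Rightarrow> ('v set \<Rightarrow> rat) \<Rightarrow> 'v \<Rightarrow> 'v \<Rightarrow> ('v list \<Rightarrow> 'v set set \<Rightarrow> 'v) \<Rightarrow> bool" where
  "competitive_on k C G \<omega> s t g \<longleftrightarrow> (\<forall>Eb. ctp_instance G \<omega> s t k Eb \<longrightarrow>
     (\<exists>n. walk_to_within (fst G) (snd G - Eb) \<omega> t
            (C * real_of_rat (shortest_dist (fst G) (snd G - Eb) \<omega> s t)) (run g s t Eb n)))"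

lemma competitive_on_iff_within:
  "competitive_on k C G \<omega> s t (A G \<omega> s t k) \<longleftrightarrow>
   (\<forall>Eb. ctp_instance G \<omega> s t k Eb \<longrightarrow> competitive_within A G \<omega> s t k Eb C)"
  unfolding competitive_on_def competitive_within_def walk_to_within_def traj_eq_run Let_def
  by blast

lemma competitive_onI:
  assumes "\<And>Eb p. ctp_instance (V, E) \<omega> s t k Eb \<Longrightarrow> is_walk V (E - Eb) p \<Longrightarrow> distinct p \<Longrightarrow>
      hd p = s \<Longrightarrow> last p = t \<Longrightarrow>
      \<exists>n. walk_to_within V (E - Eb) \<omega> t (C * real_of_rat (walk_cost \<omega> p)) (run g s t Eb n)"
  shows "competitive_on k C (V, E) \<omega> s t g"
  unfolding competitive_on_def fst_conv snd_conv
proof (intro allI impI)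
  fix Eb assume inst: "ctp_instance (V, E) \<omega> s t k Eb"
  then have "finite V" "connected_in V (E - Eb) s t"
    unfolding ctp_instance_def wf_graph_def by auto
  then obtain p where p: "is_walk V (E - Eb) p" "distinct p" "hd p = s" "last p = t"
    and shortest: "shortest_dist V (E - Eb) \<omega> s t = walk_cost \<omega> p"
    by (rule shortest_dist_attained)
  show "\<exists>n. walk_to_within V (E - Eb) \<omega> t (C * real_of_rat (shortest_dist V (E - Eb) \<omega> s t))
      (run g s t Eb n)"
    unfolding shortest by (rule assms[OF inst p])
qed

lemma competitive_on_trivial:
  assumes "C \<ge> 0"
  shows "competitive_on k C G \<omega> s s g"
proof (cases G)
  case (Pair V E)
  have "walk_to_within V (E - Eb) \<omega> s (C * real_of_rat (walk_cost \<omega> p)) (run g s s Eb 0)"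
    if "ctp_instance (V, E) \<omega> s s k Eb" "is_walk V (E - Eb) p" for Eb p
    using that assms walk_cost_nonneg[OF that(2)]
    unfolding ctp_instance_def walk_to_within_def by simp
  then show ?thesis unfolding Pair by (blast intro: competitive_onI)
qed

lemma competitive_on_induced:
  assumes wf: "wf_graph (V, E)" and pos: "\<forall>e\<in>E. \<omega> e > 0" and "U \<subseteq> V"
    and conn: "connected_graph (U, induced_edges E U)" and "C \<ge> 0"
    and g: "competitive_on k C (U, induced_edges E U) \<omega> a b g"
    and Eb: "Eb \<subseteq> E" "card Eb \<le> k"
    and p: "is_walk V (E - Eb) p" "distinct p" "hd p = a" "last p = b" "a \<noteq> b" "set p \<subseteq> U"
  shows "\<exists>n. walk_to_within U (induced_edges E U - Eb) \<omega> b (C * real_of_rat (walk_cost \<omega> p))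
    (run g a b (Eb \<inter> induced_edges E U) n)"
proof -
  let ?E = "induced_edges E U"
  have blocked: "?E - Eb \<inter> ?E = ?E - Eb" by blast
  have pU: "is_walk U (?E - Eb) p"
    using is_walk_induced[OF p(1,6)] by (simp add: induced_edges_Diff)
  have "finite U" using wf \<open>U \<subseteq> V\<close> unfolding wf_graph_def by (auto intro: finite_subset)
  have "Eb \<inter> ?E \<subset> ?E"
  proof -
    obtain y r where "p = a # y # r" using p(1,3,4,5) by (cases p rule: remdups_adj.cases) auto
    then show ?thesis using pU by auto
  qed
  moreover have "card (Eb \<inter> ?E) \<le> k"
    using Eb card_mono[of Eb "Eb \<inter> ?E"] finite_subset[OF Eb(1) wf_graph_finite_edges[OF wf]] by simp
  moreover have "connected_in U (?E - Eb \<inter> ?E) a b"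
    unfolding connected_in_def blocked using pU p(3,4) by blast
  ultimately have "ctp_instance (U, ?E) \<omega> a b k (Eb \<inter> ?E)"
    using wf_graph_induced[OF wf \<open>U \<subseteq> V\<close>] conn pos pU p(3,4)
    unfolding ctp_instance_def by (auto simp: induced_edges_def dest: connected_in_memD)
  then obtain n where "walk_to_within U (?E - Eb) \<omega> b
      (C * real_of_rat (shortest_dist U (?E - Eb) \<omega> a b)) (run g a b (Eb \<inter> ?E) n)"
    using g unfolding competitive_on_def fst_conv snd_conv blocked[symmetric] by blast
  moreover have "shortest_dist U (?E - Eb) \<omega> a b \<le> walk_cost \<omega> p"
    using shortest_dist_le[OF \<open>finite U\<close> pU p(2-4)] .
  ultimately show ?thesis
    using \<open>C \<ge> 0\<close> by (metis walk_to_within_mono mult_left_mono of_rat_less_eq order_refl)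
qed

locale vertex_removal =
  fixes V :: "'v set" and E :: "'v set set" and v :: 'v
  assumes wf: "wf_graph (V, E)" and connected: "connected_graph (V, E)" and v_in_V: "v \<in> V"
begin

definition linked :: "'v \<Rightarrow> 'v \<Rightarrow> bool" where
  "linked a b \<longleftrightarrow> connected_in (V - {v}) {e \<in> E. v \<notin> e} a b"

definition lobe :: "'v \<Rightarrow> 'v set" where
  "lobe x = {y. linked x y} \<union> {v}"

lemma linked_memD: "linked a b \<Longrightarrow> a \<in> V \<and> a \<noteq> v \<and> b \<in> V \<and> b \<noteq> v"
  unfolding linked_def using connected_in_memD by fastforce

lemma linked_refl: "a \<in> V \<Longrightarrow> a \<noteq> v \<Longrightarrow> linked a a"
  unfolding linked_def by (rule connected_in_refl) simp

lemma linked_sym: "linked a b \<Longrightarrow> linked b a"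
  unfolding linked_def by (rule connected_in_sym)

lemma linked_trans: "linked a b \<Longrightarrow> linked b c \<Longrightarrow> linked a c"
  unfolding linked_def by (rule connected_in_trans)

lemma linked_edge: "{a, b} \<in> E \<Longrightarrow> a \<noteq> v \<Longrightarrow> b \<noteq> v \<Longrightarrow> linked a b"
  unfolding linked_def using wf_graph_edgeD[OF wf] by (intro connected_in_edge) auto

lemma linked_along_walk:
  assumes "is_walk V E' q" "E' \<subseteq> E" "v \<notin> set q"
  shows "\<forall>y\<in>set q. linked (hd q) y"
proof (rule walk_propagate[OF assms(1)])
  have "hd q \<in> set q" using is_walk_nonempty[OF assms(1)] by simp
  then show "linked (hd q) (hd q)"
    using assms(3) set_walk_subset[OF assms(1)] by (blast intro: linked_refl)
  show "linked (hd q) y" if "linked (hd q) x" "{x, y} \<in> E'" "y \<in> set q" for x y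
  proof -
    have "x \<noteq> v" "y \<noteq> v" using linked_memD[OF that(1)] that(3) assms(3) by auto
    then show ?thesis using linked_edge that(2) assms(2) linked_trans[OF that(1)] by blast
  qed
qed

lemma lobe_subset: "lobe x \<subseteq> V"
  unfolding lobe_def using v_in_V by (auto dest: linked_memD)

lemma lobe_linked: "a \<in> lobe x \<Longrightarrow> linked a b \<Longrightarrow> b \<in> lobe x"
  unfolding lobe_def by (auto dest: linked_memD intro: linked_trans)

lemma connected_in_lobe:
  assumes "linked x y"
  shows "connected_in (lobe x) (induced_edges E (lobe x)) x y"
proof -
  let ?E = "induced_edges E (lobe x)"
  have "linked x y \<and> connected_in (lobe x) ?E x y"
  proof (rule connected_in_induct[of "V - {v}" "{e \<in> E. v \<notin> e}" x y])
    show "connected_in (V - {v}) {e \<in> E. v \<notin> e} x y"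
      using assms unfolding linked_def .
    have "linked x x" using linked_memD[OF assms] by (intro linked_refl) auto
    moreover from this have "connected_in (lobe x) ?E x x"
      unfolding lobe_def by (intro connected_in_refl) simp
    ultimately show "linked x x \<and> connected_in (lobe x) ?E x x" ..
  next
    fix a b assume a: "linked x a \<and> connected_in (lobe x) ?E x a"
      and ab: "{a, b} \<in> {e \<in> E. v \<notin> e}"
    have "linked a b" using ab by (intro linked_edge) auto
    then have "linked x b" using a linked_trans by blast
    have "a \<in> lobe x" "b \<in> lobe x" using a \<open>linked x b\<close> unfolding lobe_def by auto
    then have "connected_in (lobe x) ?E a b"
      using ab unfolding induced_edges_def by (intro connected_in_edge) auto
    then show "linked x b \<and> connected_in (lobe x) ?E x b"
      using connected_in_trans[OF conjunct2[OF a]] \<open>linked x b\<close> by blast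
  qed
  then show ?thesis ..
qed

lemma linked_neighbour_of_v:
  assumes "x \<in> V" "x \<noteq> v"
  obtains y where "linked x y" "{y, v} \<in> E"
proof -
  let ?P = "\<lambda>z. linked x z \<or> (\<exists>y. linked x y \<and> {y, v} \<in> E)"
  have "connected_in V E x v" using connected assms v_in_V unfolding connected_graph_def by simp
  then have "?P v"
  proof (rule connected_in_induct[where P = ?P])
    show "?P x" using linked_refl[OF assms] ..
  next
    fix a b assume IH: "?P a" and ab: "{a, b} \<in> E"
    show "?P b"
    proof (cases "linked x a")
      case True
      show ?thesis
      proof (cases "b = v")
        case False
        have "a \<noteq> v" using linked_memD[OF True] by simp
        then show ?thesis using linked_trans[OF True linked_edge[OF ab _ False]] by blast
      qed (use True ab in blast)
    qed (use IH in blast)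
  qed
  moreover have "\<not> linked x v" by (auto dest: linked_memD)
  ultimately show ?thesis using that by blast
qed

lemma connected_lobe:
  assumes "x \<in> V" "x \<noteq> v"
  shows "connected_graph (lobe x, induced_edges E (lobe x))"
proof -
  let ?E = "induced_edges E (lobe x)"
  obtain y where y: "linked x y" "{y, v} \<in> E" using linked_neighbour_of_v[OF assms] .
  have "y \<in> lobe x" "v \<in> lobe x" using y(1) unfolding lobe_def by auto
  then have "connected_in (lobe x) ?E y v"
    using y(2) unfolding induced_edges_def by (intro connected_in_edge) auto
  then have "connected_in (lobe x) ?E x v"
    by (rule connected_in_trans[OF connected_in_lobe[OF y(1)]])
  then have from_x: "connected_in (lobe x) ?E x z" if "z \<in> lobe x" for z
    using that connected_in_lobe[of x z] unfolding lobe_def by blast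
  show ?thesis unfolding connected_graph_def fst_conv snd_conv
  proof (intro ballI)
    fix u w assume "u \<in> lobe x" "w \<in> lobe x"
    then show "connected_in (lobe x) ?E u w"
      using connected_in_trans[OF connected_in_sym[OF from_x] from_x] by blast
  qed
qed

lemma lobe_psubset:
  assumes "articulation_point (V, E) v" "x \<in> V" "x \<noteq> v"
  shows "lobe x \<subset> V"
proof -
  obtain a b where a: "a \<in> V - {v}" and b: "b \<in> V - {v}" and "\<not> linked a b"
    using assms(1) unfolding articulation_point_def connected_graph_def linked_def by auto
  have "a \<notin> lobe x \<or> b \<notin> lobe x"
  proof (rule ccontr)
    assume "\<not> (a \<notin> lobe x \<or> b \<notin> lobe x)"
    then have "linked x a" "linked x b" using a b unfolding lobe_def by auto
    then show False using linked_trans[OF linked_sym] \<open>\<not> linked a b\<close> by blast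
  qed
  then show ?thesis using lobe_subset a b by blast
qed

lemma distinct_walk_split:
  assumes "is_walk V E' p" "E' \<subseteq> E" "distinct p" "v \<in> set p"
  obtains xs ys where "p = xs @ v # ys"
    "\<forall>y\<in>set xs. linked (hd p) y" "\<forall>y\<in>set ys. linked (last p) y"
proof -
  obtain xs ys where p: "p = xs @ v # ys" using assms(4) split_list by metis
  have "v \<notin> set xs" "v \<notin> set ys" using assms(3) p by auto
  have "\<forall>y\<in>set xs. linked (hd p) y"
  proof (cases "xs = []")
    case False
    then have "is_walk V E' xs" using assms(1) p is_walk_appendD1 by blast
    then show ?thesis using linked_along_walk assms(2) \<open>v \<notin> set xs\<close> p False by simp
  qed simp
  moreover have "\<forall>y\<in>set ys. linked (last p) y"
  proof (cases "ys = []")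
    case False
    have "is_walk V E' ((xs @ [v]) @ ys)" using assms(1) p by simp
    then have "is_walk V E' (rev ys)" using False is_walk_appendD2 is_walk_rev by blast
    from linked_along_walk[OF this assms(2)] show ?thesis
      using \<open>v \<notin> set ys\<close> p False by (simp add: hd_rev)
  qed simp
  ultimately show ?thesis using that p by blast
qed

lemma distinct_walk_in_lobe:
  assumes "is_walk V E' p" "E' \<subseteq> E" "distinct p" "hd p \<in> lobe x" "last p \<in> lobe x"
  shows "set p \<subseteq> lobe x"
proof (cases "v \<in> set p")
  case True
  obtain xs ys where "p = xs @ v # ys"
    "\<forall>y\<in>set xs. linked (hd p) y" "\<forall>y\<in>set ys. linked (last p) y"
    by (rule distinct_walk_split[OF assms(1-3) True])
  moreover have "v \<in> lobe x" unfolding lobe_def by simp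
  ultimately show ?thesis using lobe_linked[OF assms(4)] lobe_linked[OF assms(5)] by auto
next
  case False
  then show ?thesis using lobe_linked[OF assms(4)] linked_along_walk[OF assms(1,2) False] by blast
qed

lemma distinct_walk_across_cut:
  assumes "is_walk V E' p" "E' \<subseteq> E" "distinct p" "hd p = s" "last p = t"
    and "s \<noteq> v" "t \<noteq> v" "\<not> linked s t"
  obtains xs ys where "p = xs @ v # ys" "xs \<noteq> []" "ys \<noteq> []"
    "set (xs @ [v]) \<subseteq> lobe s" "set (v # ys) \<subseteq> lobe t"
proof -
  have "v \<in> set p"
  proof (rule ccontr)
    assume "v \<notin> set p"
    from bspec[OF linked_along_walk[OF assms(1,2) this] last_in_set[OF is_walk_nonempty[OF assms(1)]]]
    show False using assms(4,5,8) by simp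
  qed
  obtain xs ys where p: "p = xs @ v # ys"
    "\<forall>y\<in>set xs. linked (hd p) y" "\<forall>y\<in>set ys. linked (last p) y"
    by (rule distinct_walk_split[OF assms(1-3) \<open>v \<in> set p\<close>])
  moreover have "xs \<noteq> []" "ys \<noteq> []" using p(1) assms(4-7) by auto
  ultimately show ?thesis using that[OF p(1)] assms(4,5) unfolding lobe_def by auto
qed

lemma competitive_in_lobe:
  assumes pos: "\<forall>e\<in>E. \<omega> e > 0" and "C \<ge> 0" and art: "articulation_point (V, E) v"
    and x: "x \<in> V" "x \<noteq> v" and st: "s \<in> lobe x" "t \<in> lobe x" "s \<noteq> t"
    and IH: "\<And>U a b. U \<subset> V \<Longrightarrow> \<exists>g. competitive_on k C (U, induced_edges E U) \<omega> a b g"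
  shows "\<exists>g. competitive_on k C (V, E) \<omega> s t g"
proof -
  let ?E = "induced_edges E (lobe x)"
  obtain g where g: "competitive_on k C (lobe x, ?E) \<omega> s t g"
    using IH[OF lobe_psubset[OF art x]] by blast
  have "competitive_on k C (V, E) \<omega> s t (\<lambda>p R. g p (R \<inter> ?E))"
  proof (rule competitive_onI)
    fix Eb p assume inst: "ctp_instance (V, E) \<omega> s t k Eb"
      and p: "is_walk V (E - Eb) p" "distinct p" "hd p = s" "last p = t"
    have "set p \<subseteq> lobe x" using distinct_walk_in_lobe[OF p(1) _ p(2)] p(3,4) st by blast
    moreover have "Eb \<subseteq> E" "card Eb \<le> k" using inst unfolding ctp_instance_def by auto
    ultimately obtain n where
      "walk_to_within (lobe x) (?E - Eb) \<omega> t (C * real_of_rat (walk_cost \<omega> p)) (run g s t (Eb \<inter> ?E) n)"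
      using competitive_on_induced[OF wf pos lobe_subset connected_lobe[OF x] \<open>C \<ge> 0\<close> g _ _ p st(3)]
      by blast
    then show "\<exists>n. walk_to_within V (E - Eb) \<omega> t (C * real_of_rat (walk_cost \<omega> p))
        (run (\<lambda>p R. g p (R \<inter> ?E)) s t Eb n)"
      unfolding run_restrict using walk_to_within_induced[OF _ lobe_subset] by blast
  qed
  then show ?thesis by blast
qed

lemma concat_strategy_competes:
  assumes pos: "\<forall>e\<in>E. \<omega> e > 0" and "C \<ge> 0"
    and s: "s \<in> V" "s \<noteq> v" and t: "t \<in> V" "t \<noteq> v" and cut: "\<not> linked s t"
    and g1: "competitive_on k C (lobe s, induced_edges E (lobe s)) \<omega> s v g1"
    and g2: "competitive_on k C (lobe t, induced_edges E (lobe t)) \<omega> v t g2"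
    and Eb: "Eb \<subseteq> E" "card Eb \<le> k"
    and p: "is_walk V (E - Eb) p" "distinct p" "hd p = s" "last p = t"
  shows "\<exists>n. walk_to_within V (E - Eb) \<omega> t (C * real_of_rat (walk_cost \<omega> p))
    (run (concat_strategy v (induced_edges E (lobe s)) g1 (induced_edges E (lobe t)) g2) s t Eb n)"
proof -
  let ?E1 = "induced_edges E (lobe s)" and ?E2 = "induced_edges E (lobe t)"
  obtain xs ys where split: "p = xs @ v # ys" "xs \<noteq> []" "ys \<noteq> []"
    "set (xs @ [v]) \<subseteq> lobe s" "set (v # ys) \<subseteq> lobe t"
    by (rule distinct_walk_across_cut[OF p(1) _ p(2-4) s(2) t(2) cut]) auto
  let ?p1 = "xs @ [v]" and ?p2 = "v # ys"
  have pieces: "p = ?p1 @ tl ?p2" "is_walk V (E - Eb) (?p1 @ ys)" "is_walk V (E - Eb) (xs @ ?p2)"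
    "distinct ?p1" "distinct ?p2" "hd ?p1 = s" "last ?p2 = t"
    using p split(1-3) by auto
  obtain n1 where n1: "walk_to_within (lobe s) (?E1 - Eb) \<omega> v
      (C * real_of_rat (walk_cost \<omega> ?p1)) (run g1 s v (Eb \<inter> ?E1) n1)"
    using competitive_on_induced[OF wf pos lobe_subset connected_lobe[OF s] \<open>C \<ge> 0\<close> g1 Eb
        is_walk_appendD1[OF pieces(2)] pieces(4,6) _ s(2) split(4)]
    by auto
  obtain n2 where n2: "walk_to_within (lobe t) (?E2 - Eb) \<omega> t
      (C * real_of_rat (walk_cost \<omega> ?p2)) (run g2 v t (Eb \<inter> ?E2) n2)"
    using competitive_on_induced[OF wf pos lobe_subset connected_lobe[OF t] \<open>C \<ge> 0\<close> g2 Eb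
        is_walk_appendD2[OF pieces(3)] pieces(5) _ pieces(7) t(2)[symmetric] split(5)]
    by auto
  have "t \<notin> lobe s" using cut t(2) unfolding lobe_def by simp
  moreover have "\<forall>e\<in>?E2. e \<inter> lobe s \<subseteq> {v}"
    using cut linked_trans[OF _ linked_sym] unfolding induced_edges_def lobe_def by blast
  ultimately obtain n where run: "run (concat_strategy v ?E1 g1 ?E2 g2) s t Eb n
      = run g1 s v (Eb \<inter> ?E1) n1 @ tl (run g2 v t (Eb \<inter> ?E2) n2)"
    using n1 run_concat[of g1 s v Eb ?E1 n1 "lobe s" t ?E2 g2 n2] set_walk_subset
    unfolding walk_to_within_def by blast
  have "walk_to_within V (E - Eb) \<omega> t
      (C * real_of_rat (walk_cost \<omega> ?p1) + C * real_of_rat (walk_cost \<omega> ?p2))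
      (run (concat_strategy v ?E1 g1 ?E2 g2) s t Eb n)"
    unfolding run using walk_to_within_append_tl[OF
        walk_to_within_induced[OF n1 lobe_subset] walk_to_within_induced[OF n2 lobe_subset]]
    by simp
  moreover have "walk_cost \<omega> p = walk_cost \<omega> ?p1 + walk_cost \<omega> ?p2"
    using walk_cost_append_tl[of ?p1 ?p2] pieces(1) by simp
  ultimately show ?thesis by (auto simp: distrib_left of_rat_add)
qed

lemma competitive_across_cut:
  assumes pos: "\<forall>e\<in>E. \<omega> e > 0" and "C \<ge> 0"
    and s: "s \<in> V" "s \<noteq> v" and t: "t \<in> V" "t \<noteq> v" and cut: "\<not> linked s t"
    and IH: "\<And>U a b. U \<subset> V \<Longrightarrow> \<exists>g. competitive_on k C (U, induced_edges E U) \<omega> a b g"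
  shows "\<exists>g. competitive_on k C (V, E) \<omega> s t g"
proof -
  have "t \<notin> lobe s" using cut t(2) unfolding lobe_def by simp
  then have "lobe s \<subset> V" using lobe_subset t(1) by blast
  then obtain g1 where g1: "competitive_on k C (lobe s, induced_edges E (lobe s)) \<omega> s v g1"
    using IH by blast
  have "s \<notin> lobe t" using cut s(2) linked_sym unfolding lobe_def by blast
  then have "lobe t \<subset> V" using lobe_subset s(1) by blast
  then obtain g2 where g2: "competitive_on k C (lobe t, induced_edges E (lobe t)) \<omega> v t g2"
    using IH by blast
  have "competitive_on k C (V, E) \<omega> s t
      (concat_strategy v (induced_edges E (lobe s)) g1 (induced_edges E (lobe t)) g2)"
  proof (rule competitive_onI)
    fix Eb p assume inst: "ctp_instance (V, E) \<omega> s t k Eb"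
      and p: "is_walk V (E - Eb) p" "distinct p" "hd p = s" "last p = t"
    have "Eb \<subseteq> E" "card Eb \<le> k" using inst unfolding ctp_instance_def by auto
    then show "\<exists>n. walk_to_within V (E - Eb) \<omega> t (C * real_of_rat (walk_cost \<omega> p))
        (run (concat_strategy v (induced_edges E (lobe s)) g1 (induced_edges E (lobe t)) g2) s t Eb n)"
      by (rule concat_strategy_competes[OF pos \<open>C \<ge> 0\<close> s t cut g1 g2 _ _ p])
  qed
  then show ?thesis by blast
qed

lemma competitive_at_articulation_point:
  assumes pos: "\<forall>e\<in>E. \<omega> e > 0" and "C \<ge> 0" and art: "articulation_point (V, E) v"
    and "s \<in> V" "t \<in> V"
    and IH: "\<And>U a b. U \<subset> V \<Longrightarrow> \<exists>g. competitive_on k C (U, induced_edges E U) \<omega> a b g"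
  shows "\<exists>g. competitive_on k C (V, E) \<omega> s t g"
proof (cases "s = t")
  case True
  then show ?thesis using competitive_on_trivial[OF \<open>C \<ge> 0\<close>] by metis
next
  case False
  consider "s = v" | "s \<noteq> v" "t \<in> lobe s" | "s \<noteq> v" "t \<noteq> v" "\<not> linked s t"
    unfolding lobe_def by blast
  then show ?thesis
  proof cases
    case 1
    with False have "t \<noteq> v" by simp
    then have "s \<in> lobe t" "t \<in> lobe t"
      using 1 linked_refl[OF \<open>t \<in> V\<close>] unfolding lobe_def by auto
    then show ?thesis
      using competitive_in_lobe[OF pos \<open>C \<ge> 0\<close> art \<open>t \<in> V\<close> \<open>t \<noteq> v\<close> _ _ False IH] by blast
  next
    case 2
    moreover have "s \<in> lobe s" using linked_refl[OF \<open>s \<in> V\<close> 2(1)] unfolding lobe_def by simp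
    ultimately show ?thesis
      using competitive_in_lobe[OF pos \<open>C \<ge> 0\<close> art \<open>s \<in> V\<close> _ _ _ False IH] by blast
  next
    case 3
    then show ?thesis
      using competitive_across_cut[OF pos \<open>C \<ge> 0\<close> \<open>s \<in> V\<close> _ \<open>t \<in> V\<close> _ _ IH] by blast
  qed
qed

end

lemma exists_competitive_strategy:
  assumes mono: "monotone_family F" and "C \<ge> 0"
    and A: "\<forall>G \<omega> s t Eb. ctp_instance G \<omega> s t k Eb \<and> G \<in> F \<and> (\<forall>v. \<not> articulation_point G v)
           \<longrightarrow> competitive_within A G \<omega> s t k Eb C"
  shows "finite V \<Longrightarrow> (V, E) \<in> F \<Longrightarrow> \<exists>g. competitive_on k C (V, E) \<omega> s t g"
proof (induction "card V" arbitrary: V E \<omega> s t rule: less_induct)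
  case less
  show ?case
  proof (cases "wf_graph (V, E) \<and> connected_graph (V, E) \<and> (\<forall>e\<in>E. \<omega> e > 0) \<and> s \<in> V \<and> t \<in> V")
    case False
    then show ?thesis unfolding competitive_on_def ctp_instance_def by auto
  next
    case True
    then have wf: "wf_graph (V, E)" and conn: "connected_graph (V, E)" and pos: "\<forall>e\<in>E. \<omega> e > 0"
      and "s \<in> V" "t \<in> V" by auto
    show ?thesis
    proof (cases "\<exists>v. articulation_point (V, E) v")
      case False
      then have "competitive_on k C (V, E) \<omega> s t (A (V, E) \<omega> s t k)"
        unfolding competitive_on_iff_within using A less.prems(2) by blast
      then show ?thesis by blast
    next
      case True
      then obtain v where art: "articulation_point (V, E) v" by blast
      then interpret vertex_removal V E v
        using wf conn unfolding articulation_point_def by unfold_locales auto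
      show ?thesis
      proof (rule competitive_at_articulation_point[OF pos \<open>C \<ge> 0\<close> art \<open>s \<in> V\<close> \<open>t \<in> V\<close>])
        fix U a b assume "U \<subset> V"
        show "\<exists>g. competitive_on k C (U, induced_edges E U) \<omega> a b g"
        proof (rule less.hyps)
          show "card U < card V" using psubset_card_mono[OF less.prems(1) \<open>U \<subset> V\<close>] .
          show "finite U" using \<open>U \<subset> V\<close> less.prems(1) finite_subset by blast
          show "(U, induced_edges E U) \<in> F"
            using monotone_family_induced[OF mono less.prems(2)] \<open>U \<subset> V\<close> by blast
        qed
      qed
    qed
  qed
qed

theorem mainTheorem4:
  fixes F :: "'v graph set" and C :: real and k :: nat and A :: "'v strategy"
  assumes "monotone_family F" and "C \<ge> 1"
    and "\<forall>G \<omega> s t Eb. ctp_instance G \<omega> s t k Eb \<and> G \<in> F \<and> (\<forall>v. \<not> articulation_point G v)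
           \<longrightarrow> competitive_within A G \<omega> s t k Eb C"
  shows "\<exists>A' :: 'v strategy. \<forall>G \<omega> s t Eb. ctp_instance G \<omega> s t k Eb \<and> G \<in> F
           \<longrightarrow> competitive_within A' G \<omega> s t k Eb C"
proof (intro exI[of _ "\<lambda>G \<omega> s t _. SOME g. competitive_on k C G \<omega> s t g"] allI impI)
  fix G \<omega> s t Eb
  assume inst: "ctp_instance G \<omega> s t k Eb \<and> G \<in> F"
  obtain V E where G: "G = (V, E)" by fastforce
  have "finite V" using inst unfolding G ctp_instance_def wf_graph_def by simp
  then have "\<exists>g. competitive_on k C G \<omega> s t g"
    using exists_competitive_strategy[OF assms(1) _ assms(3)] assms(2) inst unfolding G by simp
  then have "competitive_on k C G \<omega> s t (SOME g. competitive_on k C G \<omega> s t g)"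
    by (rule someI_ex)
  then show "competitive_within (\<lambda>G \<omega> s t _. SOME g. competitive_on k C G \<omega> s t g) G \<omega> s t k Eb C"
    using inst competitive_on_iff_within[of k C G \<omega> s t "\<lambda>G \<omega> s t _. SOME g. competitive_on k C G \<omega> s t g"]
    by simp
qed

end
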